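(* Let $T$ be a quaternion tensor of size $2\times2\times3$ (two frontal slices, each a $2\times3$ quaternion matrix) or of size $3\times2\times2$ (two frontal slices, each a $3\times2$ quaternion matrix). Then $\mathrm{rank}(T)\le3$.
   Context: $\mathbb{H}$ denotes the real quaternions. An $n_1\times n_2\times n_3$ quaternion tensor is an array $T=(T_{ijk})$ with entries in $\mathbb{H}$, $1\le i\le n_1$, $1\le j\le n_2$, $1\le k\le n_3$; it is written $T=(A_1;\dots;A_{n_2})$ where the frontal slice $A_j$ is the $n_1\times n_3$ matrix $(T_{ijk})_{i,k}$. A nonzero tensor is simple if $T_{ijk}=a_ib_jc_k$ (quaternion product in this order) for some $\vec a\in\mathbb{H}^{n_1},\vec b\in\mathbb{H}^{n_2},\vec c\in\mathbb{H}^{n_3}$. The rank of $T$ is the least number of simple tensors summing to $T$ (the zero tensor has rank $0$). *)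

theory Defs
  imports Main "HOL.Real"
begin

text \<open>Real quaternions H: q = Re + Im1 i + Im2 j + Im3 k, with i^2 = j^2 = k^2 = ijk = -1.\<close>

codatatype quat = Quat (Re: real) (Im1: real) (Im2: real) (Im3: real)

lemma quat_eqI [intro?]:
  "Re x = Re y \<Longrightarrow> Im1 x = Im1 y \<Longrightarrow> Im2 x = Im2 y \<Longrightarrow> Im3 x = Im3 y \<Longrightarrow> x = y"
  by (rule quat.expand) simp

instantiation quat :: ring_1
begin

primcorec zero_quat where
  "Re 0 = 0" | "Im1 0 = 0" | "Im2 0 = 0" | "Im3 0 = 0"

primcorec one_quat where
  "Re 1 = 1" | "Im1 1 = 0" | "Im2 1 = 0" | "Im3 1 = 0"

primcorec plus_quat where
  "Re (x + y) = Re x + Re y" | "Im1 (x + y) = Im1 x + Im1 y"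
| "Im2 (x + y) = Im2 x + Im2 y" | "Im3 (x + y) = Im3 x + Im3 y"

primcorec uminus_quat where
  "Re (- x) = - Re x" | "Im1 (- x) = - Im1 x" | "Im2 (- x) = - Im2 x" | "Im3 (- x) = - Im3 x"

primcorec minus_quat where
  "Re (x - y) = Re x - Re y" | "Im1 (x - y) = Im1 x - Im1 y"
| "Im2 (x - y) = Im2 x - Im2 y" | "Im3 (x - y) = Im3 x - Im3 y"

primcorec times_quat where
  "Re (x * y) = Re x * Re y - Im1 x * Im1 y - Im2 x * Im2 y - Im3 x * Im3 y"
| "Im1 (x * y) = Re x * Im1 y + Im1 x * Re y + Im2 x * Im3 y - Im3 x * Im2 y"
| "Im2 (x * y) = Re x * Im2 y - Im1 x * Im3 y + Im2 x * Re y + Im3 x * Im1 y"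
| "Im3 (x * y) = Re x * Im3 y + Im1 x * Im2 y - Im2 x * Im1 y + Im3 x * Re y"

instance
  proof
  show "(0::quat) \<noteq> 1" by (metis one_quat.sel(1) zero_quat.sel(1) zero_neq_one)
qed (auto intro: quat_eqI simp: algebra_simps)

end

text \<open>Tensors of size n1 x n2 x n3 are represented as functions nat => nat => nat => quat,
  with 0-based indices i < n1, j < n2, k < n3 (entries outside this box are irrelevant).\<close>

type_synonym qtensor = "nat \<Rightarrow> nat \<Rightarrow> nat \<Rightarrow> quat"

definition simple_qtensor :: "nat \<Rightarrow> nat \<Rightarrow> nat \<Rightarrow> qtensor \<Rightarrow> bool" where
  "simple_qtensor n1 n2 n3 S \<longleftrightarrow>
     (\<exists>i<n1. \<exists>j<n2. \<exists>k<n3. S i j k \<noteq> 0) \<and>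
     (\<exists>a b c :: nat \<Rightarrow> quat. \<forall>i<n1. \<forall>j<n2. \<forall>k<n3. S i j k = a i * b j * c k)"

definition qtensor_rank :: "nat \<Rightarrow> nat \<Rightarrow> nat \<Rightarrow> qtensor \<Rightarrow> nat" where
  "qtensor_rank n1 n2 n3 T = (LEAST r. \<exists>S :: nat \<Rightarrow> qtensor.
      (\<forall>l<r. simple_qtensor n1 n2 n3 (S l)) \<and>
      (\<forall>i<n1. \<forall>j<n2. \<forall>k<n3. T i j k = (\<Sum>l<r. S l i j k)))"

end

theory Submission
  imports Defs
begin

text \<open>The quaternions form a division ring, so any four vectors in \<open>\<bbbH>\<^sup>3\<close> satisfy a nontrivial
  left-linear relation. Applied to the four fibres \<open>T(i, j, \<cdot>)\<close> of a \<open>2 \<times> 2 \<times> 3\<close> tensor, it writes one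
  fibre as a left combination \<open>T(p, q, \<cdot>) = \<alpha> T(p', q, \<cdot>) + \<beta> T(p, q', \<cdot>) + \<gamma> T(p', q', \<cdot>)\<close> of the
  other three, and such a relation yields an explicit sum of three outer products. Since conjugation
  reverses products, conjugating all entries and reversing the order of the modes turns a
  \<open>3 \<times> 2 \<times> 2\<close> tensor into a \<open>2 \<times> 2 \<times> 3\<close> one with the same number of outer products.\<close>

definition quat_normsq :: "quat \<Rightarrow> real" where
  "quat_normsq x = (Re x)\<^sup>2 + (Im1 x)\<^sup>2 + (Im2 x)\<^sup>2 + (Im3 x)\<^sup>2"

lemma quat_normsq_eq_0_iff [simp]: "quat_normsq x = 0 \<longleftrightarrow> x = 0"
proof
  assume "quat_normsq x = 0"
  then have "Re x = 0 \<and> Im1 x = 0 \<and> Im2 x = 0 \<and> Im3 x = 0"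
    unfolding quat_normsq_def by (simp add: add_nonneg_eq_0_iff)
  then show "x = 0" by (intro quat_eqI) simp_all
qed (simp add: quat_normsq_def)

instantiation quat :: division_ring
begin

primcorec inverse_quat where
  "Re (inverse x) = Re x / quat_normsq x"
| "Im1 (inverse x) = - Im1 x / quat_normsq x"
| "Im2 (inverse x) = - Im2 x / quat_normsq x"
| "Im3 (inverse x) = - Im3 x / quat_normsq x"

definition divide_quat :: "quat \<Rightarrow> quat \<Rightarrow> quat" where
  "divide_quat x y = x * inverse y"

instance
proof
  fix x :: quat
  assume "x \<noteq> 0"
  then have n: "quat_normsq x \<noteq> 0" by simp
  have sq: "(Re x * Re x + Im1 x * Im1 x + Im2 x * Im2 x + Im3 x * Im3 x) / quat_normsq x = 1"
    using n by (simp add: quat_normsq_def power2_eq_square)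
  show "inverse x * x = 1" "x * inverse x = 1"
    by (rule quat_eqI; simp add: sq[symmetric] add_divide_distrib diff_divide_distrib algebra_simps)+
qed (auto intro: quat_eqI simp: divide_quat_def)

end

primcorec qconj :: "quat \<Rightarrow> quat" where
  "Re (qconj x) = Re x" | "Im1 (qconj x) = - Im1 x" | "Im2 (qconj x) = - Im2 x" | "Im3 (qconj x) = - Im3 x"

lemma qconj_qconj [simp]: "qconj (qconj x) = x"
  by (rule quat_eqI) simp_all

lemma qconj_mult: "qconj (x * y) = qconj y * qconj x"
  by (rule quat_eqI) (simp_all add: algebra_simps)

lemma qconj_sum: "qconj (sum f A) = (\<Sum>a\<in>A. qconj (f a))"
proof (induction A rule: infinite_finite_induct)
  case (insert a A)
  have "qconj (f a + sum f A) = qconj (f a) + qconj (sum f A)"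
    by (rule quat_eqI) simp_all
  with insert show ?case by simp
qed (simp_all add: quat_eqI)

definition tensor_decomp :: "nat \<Rightarrow> nat \<Rightarrow> nat \<Rightarrow> nat \<Rightarrow> (nat \<Rightarrow> nat \<Rightarrow> nat \<Rightarrow> 'a::semiring_0) \<Rightarrow> bool" where
  "tensor_decomp r n1 n2 n3 T \<longleftrightarrow> (\<exists>a b c. \<forall>i<n1. \<forall>j<n2. \<forall>k<n3. T i j k = (\<Sum>l<r. a l i * b l j * c l k))"

lemma exists_left_linear_relation:
  fixes v :: "'i \<Rightarrow> nat \<Rightarrow> 'a::division_ring"
  assumes "finite I" and "n < card I"
  shows "\<exists>lam. (\<exists>m\<in>I. lam m \<noteq> 0) \<and> (\<forall>k<n. (\<Sum>m\<in>I. lam m * v m k) = 0)"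
  using assms
proof (induction n arbitrary: I v)
  case 0
  then obtain m where "m \<in> I" by fastforce
  then show ?case by (intro exI[of _ "\<lambda>_. 1"]) auto
next
  case (Suc n)
  show ?case
  proof (cases "\<forall>m\<in>I. v m n = 0")
    case True
    from Suc.IH[of I v] Suc.prems obtain lam where
      "\<exists>m\<in>I. lam m \<noteq> 0" "\<forall>k<n. (\<Sum>m\<in>I. lam m * v m k) = 0" by auto
    with True show ?thesis by (auto simp: less_Suc_eq)
  next
    case False
    then obtain p where p: "p \<in> I" "v p n \<noteq> 0" by auto
    define d where "d m = v m n * inverse (v p n)" for m
    define w where "w m k = v m k - d m * v p k" for m k
    have "\<exists>mu. (\<exists>m\<in>I-{p}. mu m \<noteq> 0) \<and> (\<forall>k<n. (\<Sum>m\<in>I-{p}. mu m * w m k) = 0)"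
      using Suc.prems p by (intro Suc.IH) auto
    then obtain mu where mu: "\<exists>m\<in>I-{p}. mu m \<noteq> 0" "\<forall>k<n. (\<Sum>m\<in>I-{p}. mu m * w m k) = 0"
      by blast
    define lam where "lam m = (if m = p then - (\<Sum>m\<in>I-{p}. mu m * d m) else mu m)" for m
    have lam_w: "(\<Sum>m\<in>I. lam m * v m k) = (\<Sum>m\<in>I-{p}. mu m * w m k)" for k
    proof -
      have "(\<Sum>m\<in>I. lam m * v m k) = lam p * v p k + (\<Sum>m\<in>I-{p}. mu m * v m k)"
        using Suc.prems(1) p(1) by (simp add: sum.remove lam_def)
      also have "\<dots> = (\<Sum>m\<in>I-{p}. mu m * v m k - mu m * d m * v p k)"
        by (simp add: lam_def sum_subtractf sum_distrib_right)
      also have "\<dots> = (\<Sum>m\<in>I-{p}. mu m * w m k)"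
        by (simp add: w_def right_diff_distrib mult.assoc)
      finally show ?thesis .
    qed
    have "w m n = 0" for m
      using p(2) by (simp add: w_def d_def mult.assoc)
    then have "\<forall>k<Suc n. (\<Sum>m\<in>I. lam m * v m k) = 0"
      using mu(2) by (auto simp: lam_w less_Suc_eq)
    moreover have "\<exists>m\<in>I. lam m \<noteq> 0" using mu(1) by (auto simp: lam_def)
    ultimately show ?thesis by blast
  qed
qed

lemma solve_left_linear_relation:
  fixes v :: "'i \<Rightarrow> 'a::division_ring"
  assumes "finite I" "p \<in> I" "lam p \<noteq> 0" "(\<Sum>m\<in>I. lam m * v m) = 0"
  shows "v p = (\<Sum>m\<in>I-{p}. - (inverse (lam p) * lam m) * v m)"
proof -
  have "lam p * v p = - (\<Sum>m\<in>I-{p}. lam m * v m)"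
    using assms by (simp add: sum.remove eq_neg_iff_add_eq_0)
  then have "v p = - (inverse (lam p) * (\<Sum>m\<in>I-{p}. lam m * v m))"
    using assms(3) by (metis left_inverse minus_mult_right mult.assoc mult_1_left)
  then show ?thesis
    by (simp add: sum_distrib_left sum_negf mult.assoc)
qed

lemma tensor_decomp_2_2_of_fibre_relation:
  fixes T :: "nat \<Rightarrow> nat \<Rightarrow> nat \<Rightarrow> 'a::ring_1"
  assumes "p < 2" "q < 2"
    and rel: "\<forall>k<n3. T p q k = \<alpha> * T (1-p) q k + \<beta> * T p (1-q) k + \<gamma> * T (1-p) (1-q) k"
  shows "tensor_decomp 3 2 2 n3 T"
proof -
  define p' q' where "p' = 1 - p" and "q' = 1 - q"
  define r s where "r = \<alpha> + 1" and "s = \<gamma> + \<beta> * r"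
  \<comment> \<open>The (p, q) entry of the decomposition is (r s - \<alpha> s - \<beta> r) T p' q' + \<alpha> T p' q + \<beta> T p q', and r s - \<alpha> s - \<beta> r = \<gamma>.\<close>
  define a where "a l i = (if i = p' then [1, 1, 0] ! l else [r, \<alpha>, 1] ! l)" for l i
  define b where "b l j = (if j = q' then [1, 0, 1] ! l else [s, 1, \<beta>] ! l)" for l j
  define c where "c l k = [T p' q' k, T p' q k - s * T p' q' k, T p q' k - r * T p' q' k] ! l" for l k
  have "T i j k = (\<Sum>l<3. a l i * b l j * c l k)" if "i < 2" "j < 2" "k < n3" for i j k
  proof -
    have "i = p \<or> i = p'" "j = q \<or> j = q'" "p \<noteq> p'" "q \<noteq> q'"
      using that assms(1,2) unfolding p'_def q'_def by arith+
    moreover have "T p q k = (r * s - \<alpha> * s - \<beta> * r) * T p' q' k + \<alpha> * T p' q k + \<beta> * T p q' k"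
      using rel that(3) by (simp add: p'_def q'_def r_def s_def algebra_simps)
    ultimately show ?thesis
      by (auto simp: a_def b_def c_def numeral_3_eq_3 algebra_simps)
  qed
  then show ?thesis unfolding tensor_decomp_def by blast
qed

lemma tensor_decomp_2_2:
  fixes T :: qtensor
  assumes "n3 \<le> 3"
  shows "tensor_decomp 3 2 2 n3 T"
proof -
  let ?I = "{..<2::nat} \<times> {..<2::nat}"
  obtain lam where "\<exists>m\<in>?I. lam m \<noteq> 0" and rel: "\<forall>k<n3. (\<Sum>m\<in>?I. lam m * T (fst m) (snd m) k) = 0"
    using exists_left_linear_relation[of ?I n3 "\<lambda>m. T (fst m) (snd m)"] assms by auto
  then obtain p q where pq: "p < 2" "q < 2" "lam (p, q) \<noteq> 0" by auto
  define coeff where "coeff m = - (inverse (lam (p, q)) * lam m)" for m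
  have others: "?I - {(p, q)} = {(1-p, q), (p, 1-q), (1-p, 1-q)}"
    using pq(1,2) by (auto simp: less_2_cases_iff)
  have "1 - p \<noteq> p" "1 - q \<noteq> q" using pq(1,2) by arith+
  then have "T p q k = coeff (1-p, q) * T (1-p) q k + coeff (p, 1-q) * T p (1-q) k
                       + coeff (1-p, 1-q) * T (1-p) (1-q) k" if "k < n3" for k
    using solve_left_linear_relation[of ?I "(p, q)" lam "\<lambda>m. T (fst m) (snd m) k"] pq rel that
    by (simp add: others coeff_def add.assoc)
  then show ?thesis
    by (intro tensor_decomp_2_2_of_fibre_relation[OF pq(1,2)]) blast
qed

lemma sum_products_eq_sum_simple_qtensors:
  fixes a b c :: "nat \<Rightarrow> nat \<Rightarrow> quat"
  shows "\<exists>r'\<le>r. \<exists>S. (\<forall>l<r'. simple_qtensor n1 n2 n3 (S l)) \<and>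
           (\<forall>i<n1. \<forall>j<n2. \<forall>k<n3. (\<Sum>l<r. a l i * b l j * c l k) = (\<Sum>l<r'. S l i j k))"
proof (induction r)
  case 0
  show ?case by auto
next
  case (Suc r)
  then obtain r' S where r': "r' \<le> r" "\<forall>l<r'. simple_qtensor n1 n2 n3 (S l)"
    "\<forall>i<n1. \<forall>j<n2. \<forall>k<n3. (\<Sum>l<r. a l i * b l j * c l k) = (\<Sum>l<r'. S l i j k)" by blast
  define t where "t i j k = a r i * b r j * c r k" for i j k
  show ?case
  proof (cases "simple_qtensor n1 n2 n3 t")
    case True
    have "\<forall>l<Suc r'. simple_qtensor n1 n2 n3 ((S(r' := t)) l)"
      using r'(2) True by (auto simp: less_Suc_eq)
    moreover have "(\<Sum>l<r'. (S(r' := t)) l i j k) = (\<Sum>l<r'. S l i j k)" for i j k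
      by (rule sum.cong) auto
    ultimately show ?thesis
      using r' by (intro exI[of _ "Suc r'"] exI[of _ "S(r' := t)"]) (auto simp: t_def)
  next
    case False
    then have "\<forall>i<n1. \<forall>j<n2. \<forall>k<n3. t i j k = 0"
      unfolding simple_qtensor_def t_def by blast
    then show ?thesis
      using r' by (intro exI[of _ r'] exI[of _ S]) (auto simp: t_def)
  qed
qed

lemma qtensor_rank_le:
  assumes "tensor_decomp r n1 n2 n3 T"
  shows "qtensor_rank n1 n2 n3 T \<le> r"
proof -
  obtain a b c where abc: "\<forall>i<n1. \<forall>j<n2. \<forall>k<n3. T i j k = (\<Sum>l<r. a l i * b l j * c l k)"
    using assms unfolding tensor_decomp_def by blast
  obtain r' S where "r' \<le> r" "\<forall>l<r'. simple_qtensor n1 n2 n3 (S l)"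
    "\<forall>i<n1. \<forall>j<n2. \<forall>k<n3. (\<Sum>l<r. a l i * b l j * c l k) = (\<Sum>l<r'. S l i j k)"
    using sum_products_eq_sum_simple_qtensors by blast
  with abc have "qtensor_rank n1 n2 n3 T \<le> r'"
    unfolding qtensor_rank_def by (intro Least_le) auto
  with \<open>r' \<le> r\<close> show ?thesis by simp
qed

lemma tensor_decomp_qconj_transpose:
  fixes T :: qtensor
  assumes "tensor_decomp r n1 n2 n3 T"
  shows "tensor_decomp r n3 n2 n1 (\<lambda>i j k. qconj (T k j i))"
proof -
  obtain a b c where abc: "\<forall>i<n1. \<forall>j<n2. \<forall>k<n3. T i j k = (\<Sum>l<r. a l i * b l j * c l k)"
    using assms unfolding tensor_decomp_def by blast
  have "qconj (T k j i) = (\<Sum>l<r. qconj (c l i) * qconj (b l j) * qconj (a l k))"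
    if "i < n3" "j < n2" "k < n1" for i j k
    using abc that by (simp add: qconj_sum qconj_mult mult.assoc)
  then show ?thesis
    unfolding tensor_decomp_def by (intro exI[of _ "\<lambda>l. qconj \<circ> c l"] exI[of _ "\<lambda>l. qconj \<circ> b l"] exI[of _ "\<lambda>l. qconj \<circ> a l"]) simp
qed

theorem mainTheorem8:
  fixes T :: qtensor and n1 n2 n3 :: nat
  assumes "(n1, n2, n3) = (2, 2, 3) \<or> (n1, n2, n3) = (3, 2, 2)"
  shows "qtensor_rank n1 n2 n3 T \<le> 3"
  using assms
proof
  assume "(n1, n2, n3) = (2, 2, 3)"
  then show ?thesis using qtensor_rank_le tensor_decomp_2_2[of 3 T] by simp
next
  assume dims: "(n1, n2, n3) = (3, 2, 2)"
  have "tensor_decomp 3 2 2 3 (\<lambda>i j k. qconj (T k j i))"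
    by (rule tensor_decomp_2_2) simp
  from tensor_decomp_qconj_transpose[OF this] have "tensor_decomp 3 3 2 2 T"
    by simp
  with dims show ?thesis using qtensor_rank_le by simp
qed

end
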